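(* Consider the objective $$\Phi(w,u)=\frac1n\sum_{i=1}^n\Big[-L\big(y_i,f(w,u)(x^i)\big)+\sum_{r=1}^K f_r(w,u)(x^i)\Big]+\epsilon\Big(\sum_{r,l}w_{r,l}+\sum_{l,m}u_{lm}\Big),\quad\epsilon>0,$$ for a family of functions $f_r(w,u)(x)$, $r\in[K]$, that are twice continuously differentiable in $(w,u)$ on a neighbourhood of $B_{++}$ and whose first and second partial derivatives in the entries of $(w,u)$ are nonnegative there. Suppose there exist constants $C_w,C_u,M_{w,w},M_{w,u},M_{u,w},M_{u,u}>0$ such that for every $x\in\{x^1,\dots,x^n\}$, every $(w,u)\in B_{++}$, all $r,s\in[K]$, $t,b'\in[n_1]$ (indices for $w$) and $a\in[n_1]$, $b\in[d]$, $a'\in[n_1]$, $b''\in[d]$ (indices for $u$): $$\sum_{t}w_{s,t}\frac{\partial f_r(x)}{\partial w_{s,t}}\le C_w,\qquad \sum_{a,b}u_{ab}\frac{\partial f_r(x)}{\partial u_{ab}}\le C_u,$$ $$\sum_t w_{s,t}\frac{\partial^2 f_r(x)}{\partial w_{s,t}\partial w_{q,b'}}\le M_{w,w}\frac{\partial f_r(x)}{\partial w_{q,b'}},\qquad \sum_{a,b}u_{ab}\frac{\partial^2 f_r(x)}{\partial u_{ab}\partial w_{q,b'}}\le M_{w,u}\frac{\partial f_r(x)}{\partial w_{q,b'}},$$ $$\sum_t w_{s,t}\frac{\partial^2 f_r(x)}{\partial w_{s,t}\partial u_{a'b''}}\le M_{u,w}\frac{\partial f_r(x)}{\partial u_{a'b''}},\qquad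 \sum_{a,b}u_{ab}\frac{\partial^2 f_r(x)}{\partial u_{ab}\partial u_{a'b''}}\le M_{u,u}\frac{\partial f_r(x)}{\partial u_{a'b''}}$$ (for all $q\in[K]$). Then $F=G^\Phi$ is well defined on $B_{++}$ and $F$ and the matrix $$A=2\,\mathrm{diag}(p_w'-1,\dots,p_w'-1,p_u'-1)\begin{pmatrix}(2C_w+M_{w,w})\mathbf{1}\mathbf{1}^T & (2C_u+M_{w,u})\mathbf{1}\\ (2C_w+M_{u,w})\mathbf{1}^T & 2C_u+M_{u,u}\end{pmatrix}\in\mathbb{R}^{(K+1)\times(K+1)}$$ (with $\mathbf{1}\in\mathbb{R}^K$ the all-ones vector) satisfy, for all $i,k\in[K]$, $j,a\in[n_1]$, $b\in[d]$, $(w,u)\in B_{++}$: $$\langle|\nabla_{w_k}F_{w_{i,j}}|,w_k\rangle\le A_{i,k}F_{w_{i,j}},\ \langle|\nabla_u F_{w_{i,j}}|,u\rangle\le A_{i,K+1}F_{w_{i,j}},\ \langle|\nabla_{w_k}F_{u_{ab}}|,w_k\rangle\le A_{K+1,k}F_{u_{ab}},\ \langle|\nabla_u F_{u_{ab}}|,u\rangle\le A_{K+1,K+1}F_{u_{ab}}.$$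
   Context: Data $(x^i,y_i)\in\mathbb{R}^d_+\times[K]$, $i\in[n]$. $w\in\mathbb{R}^{K\times n_1}$ with rows $w_1,\dots,w_K$, $u\in\mathbb{R}^{n_1\times d}$. Loss $L(y,f(x))=-f_y(x)+\log\sum_{j=1}^K e^{f_j(x)}$. $V_{++}=\mathbb{R}^{K\times n_1}_{++}\times\mathbb{R}^{n_1\times d}_{++}$; given $p_w,p_u\in(1,\infty)$, $\rho_w,\rho_u>0$, $B_{++}=\{(w,u)\in V_{++}:\|u\|_{p_u}\le\rho_u,\ \|w_i\|_{p_w}\le\rho_w\ \forall i\}$ (entrywise norms). For $p\in(1,\infty)$, $p'=p/(p-1)$, $\psi_p(z)=\operatorname{sign}(z)|z|^{p-1}$ componentwise; $$G^{\Phi}(w,u)=\Big(\tfrac{\rho_w\psi_{p_w'}(\nabla_{w_1}\Phi)}{\|\psi_{p_w'}(\nabla_{w_1}\Phi)\|_{p_w}},\dots,\tfrac{\rho_w\psi_{p_w'}(\nabla_{w_K}\Phi)}{\|\psi_{p_w'}(\nabla_{w_K}\Phi)\|_{p_w}},\tfrac{\rho_u\psi_{p_u'}(\nabla_u\Phi)}{\|\psi_{p_u'}(\nabla_u\Phi)\|_{p_u}}\Big)(w,u),$$ whose components are denoted $F_{w_{i,j}}$, $F_{u_{ab}}$. $|\cdot|$ is the entrywise absolute value, $\langle\cdot,\cdot\rangle$ the Frobenius inner product, all quantities evaluated at $(w,u)$. *)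

theory Defs
  imports "HOL-Analysis.Analysis"
begin

text \<open>Parameters (w,u): w is a K x n1 matrix (rows w_1..w_K), u is an n1 x d matrix.
  The index types 'k, 'h, 'd stand for [K], [n1], [d].\<close>
type_synonym ('k,'h,'d) param = "(real^'h^'k) \<times> (real^'d^'h)"

definition pd :: "('a::real_normed_vector \<Rightarrow> real) \<Rightarrow> 'a \<Rightarrow> 'a \<Rightarrow> real" where
  "pd g th v = frechet_derivative g (at th) v"

definition pd2 :: "('a::real_normed_vector \<Rightarrow> real) \<Rightarrow> 'a \<Rightarrow> 'a \<Rightarrow> 'a \<Rightarrow> real" where
  "pd2 g th v1 v2 = pd (\<lambda>eta. pd g eta v1) th v2"

definition dirW :: "'k::finite \<Rightarrow> 'h::finite \<Rightarrow> ('k,'h,'d::finite) param" where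
  "dirW s t = (axis s (axis t 1), 0)"

definition dirU :: "'h::finite \<Rightarrow> 'd::finite \<Rightarrow> ('k::finite,'h,'d) param" where
  "dirU a b = (0, axis a (axis b 1))"

definition C2_on :: "'a::euclidean_space set \<Rightarrow> ('a \<Rightarrow> real) \<Rightarrow> bool" where
  "C2_on S g \<longleftrightarrow>
     (\<forall>th\<in>S. g differentiable (at th)) \<and>
     (\<forall>v\<in>Basis. \<forall>th\<in>S. (\<lambda>eta. pd g eta v) differentiable (at th)) \<and>
     (\<forall>v1\<in>Basis. \<forall>v2\<in>Basis. continuous_on S (\<lambda>th. pd2 g th v1 v2))"

definition CE_loss :: "'k::finite \<Rightarrow> ('k \<Rightarrow> real) \<Rightarrow> real" where
  "CE_loss yk z = - z yk + ln (\<Sum>j\<in>UNIV. exp (z j))"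

definition Phi :: "('k::finite \<Rightarrow> real^'d \<Rightarrow> ('k,'h::finite,'d::finite) param \<Rightarrow> real)
      \<Rightarrow> (nat \<Rightarrow> real^'d) \<Rightarrow> (nat \<Rightarrow> 'k) \<Rightarrow> nat \<Rightarrow> real \<Rightarrow> ('k,'h,'d) param \<Rightarrow> real" where
  "Phi f x y n \<epsilon> th =
     (1 / real n) * (\<Sum>i<n. - CE_loss (y i) (\<lambda>r. f r (x i) th) + (\<Sum>r\<in>UNIV. f r (x i) th))
     + \<epsilon> * ((\<Sum>r\<in>UNIV. \<Sum>l\<in>UNIV. fst th $ r $ l) + (\<Sum>l\<in>UNIV. \<Sum>m\<in>UNIV. snd th $ l $ m))"

definition psi :: "real \<Rightarrow> real \<Rightarrow> real" where
  "psi p z = sgn z * \<bar>z\<bar> powr (p - 1)"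

definition hconj :: "real \<Rightarrow> real" where
  "hconj p = p / (p - 1)"

definition pnorm_row :: "real \<Rightarrow> real^'h::finite \<Rightarrow> real" where
  "pnorm_row p v = (\<Sum>j\<in>UNIV. \<bar>v $ j\<bar> powr p) powr (1 / p)"

definition pnorm_mat :: "real \<Rightarrow> real^'d::finite^'h::finite \<Rightarrow> real" where
  "pnorm_mat p u = (\<Sum>a\<in>UNIV. \<Sum>b\<in>UNIV. \<bar>u $ a $ b\<bar> powr p) powr (1 / p)"

definition Bpp :: "real \<Rightarrow> real \<Rightarrow> real \<Rightarrow> real \<Rightarrow> ('k::finite,'h::finite,'d::finite) param set" where
  "Bpp pw pu \<rho>w \<rho>u = {th. (\<forall>r l. fst th $ r $ l > 0) \<and> (\<forall>a b. snd th $ a $ b > 0) \<and>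
      pnorm_mat pu (snd th) \<le> \<rho>u \<and> (\<forall>i. pnorm_row pw (fst th $ i) \<le> \<rho>w)}"

definition denomW :: "real \<Rightarrow> (('k::finite,'h::finite,'d::finite) param \<Rightarrow> real) \<Rightarrow> 'k \<Rightarrow> ('k,'h,'d) param \<Rightarrow> real" where
  "denomW pw \<Phi> i th = pnorm_row pw (\<chi> t. psi (hconj pw) (pd \<Phi> th (dirW i t)))"

definition denomU :: "real \<Rightarrow> (('k::finite,'h::finite,'d::finite) param \<Rightarrow> real) \<Rightarrow> ('k,'h,'d) param \<Rightarrow> real" where
  "denomU pu \<Phi> th = pnorm_mat pu (\<chi> a b. psi (hconj pu) (pd \<Phi> th (dirU a b)))"

definition GW :: "real \<Rightarrow> real \<Rightarrow> (('k::finite,'h::finite,'d::finite) param \<Rightarrow> real) \<Rightarrow> 'k \<Rightarrow> 'h \<Rightarrow> ('k,'h,'d) param \<Rightarrow> real" where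
  "GW pw \<rho>w \<Phi> i j th = \<rho>w * psi (hconj pw) (pd \<Phi> th (dirW i j)) / denomW pw \<Phi> i th"

definition GU :: "real \<Rightarrow> real \<Rightarrow> (('k::finite,'h::finite,'d::finite) param \<Rightarrow> real) \<Rightarrow> 'h \<Rightarrow> 'd \<Rightarrow> ('k,'h,'d) param \<Rightarrow> real" where
  "GU pu \<rho>u \<Phi> a b th = \<rho>u * psi (hconj pu) (pd \<Phi> th (dirU a b)) / denomU pu \<Phi> th"

text \<open>The matrix A in R^{(K+1)x(K+1)}, rows/columns indexed by 'k option
  (Some i = index i in [K], None = index K+1):
  A = 2 diag(pw'-1,...,pw'-1,pu'-1) * Blk.\<close>
definition Amat :: "real \<Rightarrow> real \<Rightarrow> real \<Rightarrow> real \<Rightarrow> real \<Rightarrow> real \<Rightarrow> real \<Rightarrow> real \<Rightarrow>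
    'k option \<Rightarrow> 'k option \<Rightarrow> real" where
  "Amat pw pu Cw Cu Mww Mwu Muw Muu i k =
     2 * (case i of Some _ \<Rightarrow> hconj pw - 1 | None \<Rightarrow> hconj pu - 1) *
     (case (i, k) of
        (Some _, Some _) \<Rightarrow> 2 * Cw + Mww
      | (Some _, None) \<Rightarrow> 2 * Cu + Mwu
      | (None, Some _) \<Rightarrow> 2 * Cw + Muw
      | (None, None) \<Rightarrow> 2 * Cu + Muu)"

end

theory Submission
  imports Defs
begin

text \<open>
  Fix a block of coordinates (a row of w, or u) and let g t > 0 be the partial derivatives of
  Phi in that block. On positive arguments psi q z = z powr (q - 1) with q = p', so a
  component of F is rho * g j powr (q - 1) / (sum t. g t powr q) powr (1/p), and its logarithmic
  derivative is (q - 1) * (dg j / g j - sum t. pi t * dg t / g t) for the probability weights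
  pi t = g t powr q / (sum u. g u powr q). It therefore suffices that the weighted absolute
  derivatives of every g t are at most (2 C + M) * g t.

  Now g t = 1/n * sum l r. c r * df r + eps, with c = e_y + 1 - softmax f >= 0, so g t >= eps.
  Differentiating once more produces second derivatives of f, bounded by the M constants after
  Schwarz's theorem, and derivatives of the softmax; the weighted deviation of df from its
  softmax mean is at most 2 C (1 - softmax r), which is absorbed by c r >= 1 - softmax r.
\<close>

section \<open>Partial derivatives and Schwarz's theorem\<close>

lemma pd_eq: "(g has_derivative g') (at th) \<Longrightarrow> pd g th v = g' v"
  unfolding pd_def using frechet_derivative_at by metis

lemma has_derivative_pd:
  "g differentiable (at th) \<Longrightarrow> (g has_derivative pd g th) (at th)"
  unfolding pd_def[abs_def] by (rule frechet_derivative_works[THEN iffD1])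

lemma has_real_derivative_along_line:
  assumes "h differentiable (at (p + s *\<^sub>R v))"
  shows "((\<lambda>s. h (p + s *\<^sub>R v)) has_real_derivative pd h (p + s *\<^sub>R v) v) (at s)"
proof -
  have line: "((\<lambda>t. p + t *\<^sub>R v) has_derivative (\<lambda>t. t *\<^sub>R v)) (at s)"
    by (auto intro!: derivative_eq_intros)
  have "((\<lambda>t. h (p + t *\<^sub>R v)) has_derivative (\<lambda>t. pd h (p + s *\<^sub>R v) (t *\<^sub>R v))) (at s)"
    using has_derivative_compose[OF line has_derivative_pd[OF assms]] by simp
  moreover have "(\<lambda>t. pd h (p + s *\<^sub>R v) (t *\<^sub>R v)) = (*) (pd h (p + s *\<^sub>R v) v)"
    using linear_scale[OF has_derivative_linear[OF has_derivative_pd[OF assms]]]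
    by (auto simp: mult.commute)
  ultimately show ?thesis unfolding has_field_derivative_def by simp
qed

lemma second_difference_mean_value:
  fixes g :: "'a::real_normed_vector \<Rightarrow> real"
  assumes dif: "\<forall>\<eta>\<in>S. g differentiable (at \<eta>)"
    and dif1: "\<forall>\<eta>\<in>S. (\<lambda>\<eta>. pd g \<eta> v1) differentiable (at \<eta>)"
    and st: "s > 0" "t > 0"
    and box: "\<And>\<sigma> \<tau>. 0 \<le> \<sigma> \<Longrightarrow> \<sigma> \<le> s \<Longrightarrow> 0 \<le> \<tau> \<Longrightarrow> \<tau> \<le> t \<Longrightarrow> x + \<sigma> *\<^sub>R v1 + \<tau> *\<^sub>R v2 \<in> S"
  shows "\<exists>\<sigma> \<tau>. 0 < \<sigma> \<and> \<sigma> < s \<and> 0 < \<tau> \<and> \<tau> < t \<and>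
    g (x + s *\<^sub>R v1 + t *\<^sub>R v2) - g (x + s *\<^sub>R v1) - g (x + t *\<^sub>R v2) + g x
      = s * t * pd2 g (x + \<sigma> *\<^sub>R v1 + \<tau> *\<^sub>R v2) v1 v2"
proof -
  define \<phi> where "\<phi> \<sigma> = g ((x + t *\<^sub>R v2) + \<sigma> *\<^sub>R v1) - g (x + \<sigma> *\<^sub>R v1)" for \<sigma>
  have "\<exists>z. 0 < z \<and> z < s \<and> \<phi> s - \<phi> 0 = (s - 0) *
      (pd g ((x + t *\<^sub>R v2) + z *\<^sub>R v1) v1 - pd g (x + z *\<^sub>R v1) v1)"
  proof (rule MVT2[OF st(1)])
    fix z assume z: "0 \<le> z" "z \<le> s"
    have "(x + t *\<^sub>R v2) + z *\<^sub>R v1 \<in> S" "x + z *\<^sub>R v1 \<in> S"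
      using box[of z t] box[of z 0] z st by (simp_all add: algebra_simps)
    then show "DERIV \<phi> z :> pd g ((x + t *\<^sub>R v2) + z *\<^sub>R v1) v1 - pd g (x + z *\<^sub>R v1) v1"
      unfolding \<phi>_def using dif by (intro DERIV_diff has_real_derivative_along_line) auto
  qed
  then obtain \<sigma> where \<sigma>: "0 < \<sigma>" "\<sigma> < s" and \<phi>_diff: "\<phi> s - \<phi> 0 = s *
      (pd g ((x + t *\<^sub>R v2) + \<sigma> *\<^sub>R v1) v1 - pd g (x + \<sigma> *\<^sub>R v1) v1)" by auto
  define \<psi> where "\<psi> \<tau> = pd g ((x + \<sigma> *\<^sub>R v1) + \<tau> *\<^sub>R v2) v1" for \<tau>
  have "\<exists>z. 0 < z \<and> z < t \<and> \<psi> t - \<psi> 0 = (t - 0) *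
      pd (\<lambda>\<eta>. pd g \<eta> v1) ((x + \<sigma> *\<^sub>R v1) + z *\<^sub>R v2) v2"
  proof (rule MVT2[OF st(2)])
    fix z assume "0 \<le> z" "z \<le> t"
    then have "(x + \<sigma> *\<^sub>R v1) + z *\<^sub>R v2 \<in> S" using box[of \<sigma> z] \<sigma> by simp
    then show "DERIV \<psi> z :> pd (\<lambda>\<eta>. pd g \<eta> v1) ((x + \<sigma> *\<^sub>R v1) + z *\<^sub>R v2) v2"
      unfolding \<psi>_def using dif1 by (intro has_real_derivative_along_line) auto
  qed
  then obtain \<tau> where \<tau>: "0 < \<tau>" "\<tau> < t" and \<psi>_diff: "\<psi> t - \<psi> 0 = t *
      pd (\<lambda>\<eta>. pd g \<eta> v1) ((x + \<sigma> *\<^sub>R v1) + \<tau> *\<^sub>R v2) v2" by auto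
  have "g (x + s *\<^sub>R v1 + t *\<^sub>R v2) - g (x + s *\<^sub>R v1) - g (x + t *\<^sub>R v2) + g x = \<phi> s - \<phi> 0"
    unfolding \<phi>_def by (simp add: algebra_simps)
  also have "\<dots> = s * (\<psi> t - \<psi> 0)" unfolding \<phi>_diff \<psi>_def by (simp add: algebra_simps)
  also have "\<dots> = s * t * pd2 g (x + \<sigma> *\<^sub>R v1 + \<tau> *\<^sub>R v2) v1 v2"
    unfolding \<psi>_diff pd2_def by simp
  finally show ?thesis using \<sigma> \<tau> by blast
qed

lemma second_difference_tendsto_pd2:
  fixes g :: "'a::euclidean_space \<Rightarrow> real"
  assumes S: "open S" and C2: "C2_on S g" and xS: "x \<in> S" and v: "v1 \<in> Basis" "v2 \<in> Basis"
  shows "((\<lambda>s. (g (x + s *\<^sub>R v1 + s *\<^sub>R v2) - g (x + s *\<^sub>R v1) - g (x + s *\<^sub>R v2) + g x) / (s * s))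
           \<longlongrightarrow> pd2 g x v1 v2) (at_right 0)"
proof (rule tendstoI)
  fix e :: real assume "e > 0"
  moreover have "isCont (\<lambda>th. pd2 g th v1 v2) x"
    using C2 v S xS unfolding C2_on_def continuous_on_eq_continuous_at[OF S] by auto
  ultimately obtain \<delta> where \<delta>: "\<delta> > 0"
    and near: "\<And>y. dist y x < \<delta> \<Longrightarrow> dist (pd2 g y v1 v2) (pd2 g x v1 v2) < e"
    unfolding continuous_at_eps_delta by blast
  obtain r where r: "r > 0" "ball x r \<subseteq> S" using S xS open_contains_ball by blast
  have dist_box: "dist (x + a *\<^sub>R v1 + b *\<^sub>R v2) x \<le> a + b" if "0 \<le> a" "0 \<le> b" for a b
    using norm_triangle_ineq[of "a *\<^sub>R v1" "b *\<^sub>R v2"] that v by (simp add: dist_norm)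
  show "\<forall>\<^sub>F s in at_right 0. dist ((g (x + s *\<^sub>R v1 + s *\<^sub>R v2) - g (x + s *\<^sub>R v1)
          - g (x + s *\<^sub>R v2) + g x) / (s * s)) (pd2 g x v1 v2) < e"
    unfolding eventually_at_right_field
  proof (intro exI[of _ "min \<delta> r / 2"] conjI allI impI)
    show "0 < min \<delta> r / 2" using \<delta> r by simp
    fix s :: real assume s: "0 < s" "s < min \<delta> r / 2"
    have box: "x + a *\<^sub>R v1 + b *\<^sub>R v2 \<in> S" if "0 \<le> a" "a \<le> s" "0 \<le> b" "b \<le> s" for a b
      using dist_box[of a b] that s r by (auto simp: dist_commute)
    obtain \<sigma> \<tau> where \<sigma>\<tau>: "0 < \<sigma>" "\<sigma> < s" "0 < \<tau>" "\<tau> < s" and diff: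
      "g (x + s *\<^sub>R v1 + s *\<^sub>R v2) - g (x + s *\<^sub>R v1) - g (x + s *\<^sub>R v2) + g x
        = s * s * pd2 g (x + \<sigma> *\<^sub>R v1 + \<tau> *\<^sub>R v2) v1 v2"
      using second_difference_mean_value[of S g v1 s s x v2] box s(1) C2 v unfolding C2_on_def by blast
    have "dist (x + \<sigma> *\<^sub>R v1 + \<tau> *\<^sub>R v2) x < \<delta>" using dist_box[of \<sigma> \<tau>] \<sigma>\<tau> s by linarith
    then show "dist ((g (x + s *\<^sub>R v1 + s *\<^sub>R v2) - g (x + s *\<^sub>R v1)
          - g (x + s *\<^sub>R v2) + g x) / (s * s)) (pd2 g x v1 v2) < e"
      using near diff s(1) by simp
  qed
qed

text \<open>Schwarz's theorem: the second difference is symmetric in the two directions.\<close>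
lemma pd2_commute:
  fixes g :: "'a::euclidean_space \<Rightarrow> real"
  assumes "open S" "C2_on S g" "x \<in> S" "v1 \<in> Basis" "v2 \<in> Basis"
  shows "pd2 g x v1 v2 = pd2 g x v2 v1"
proof (rule tendsto_unique[OF trivial_limit_at_right_real])
  show "((\<lambda>s. (g (x + s *\<^sub>R v1 + s *\<^sub>R v2) - g (x + s *\<^sub>R v1) - g (x + s *\<^sub>R v2) + g x) / (s * s))
           \<longlongrightarrow> pd2 g x v1 v2) (at_right 0)"
    using second_difference_tendsto_pd2[OF assms] .
  show "((\<lambda>s. (g (x + s *\<^sub>R v1 + s *\<^sub>R v2) - g (x + s *\<^sub>R v1) - g (x + s *\<^sub>R v2) + g x) / (s * s))
           \<longlongrightarrow> pd2 g x v2 v1) (at_right 0)"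
    using second_difference_tendsto_pd2[OF assms(1-3) assms(5,4)] by (simp add: algebra_simps)
qed

section \<open>The normalised map\<close>

lemma has_derivative_real_compose:
  assumes "(h has_real_derivative D) (at (g x))" "(g has_derivative g') (at x)"
  shows "((\<lambda>\<eta>. h (g \<eta>)) has_derivative (\<lambda>w. D * g' w)) (at x)"
  using has_derivative_compose[OF assms(2) assms(1)[unfolded has_field_derivative_def]] by simp

lemma has_real_derivative_powr_on_pos:
  assumes "z > 0" and "\<And>z. z > 0 \<Longrightarrow> h z = z powr r"
  shows "(h has_real_derivative r * z powr r / z) (at z)"
proof (subst DERIV_cong_ev[OF refl _ refl])
  have "eventually (\<lambda>w. w \<in> {0<..}) (nhds z)"
    using assms(1) by (intro eventually_nhds_in_open) auto
  then show "eventually (\<lambda>z. h z = z powr r) (nhds z)"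
    by eventually_elim (simp add: assms(2))
  show "((\<lambda>z. z powr r) has_real_derivative r * z powr r / z) (at z)"
    using has_real_derivative_powr[OF assms(1), of r] assms(1) by (simp add: powr_diff)
qed

lemma has_derivative_divide_logarithmic:
  fixes N D :: "'a::real_normed_vector \<Rightarrow> real"
  assumes "(N has_derivative (\<lambda>w. N x * a w)) (at x)" "(D has_derivative (\<lambda>w. D x * b w)) (at x)"
    and "D x \<noteq> 0"
  shows "((\<lambda>\<eta>. N \<eta> / D \<eta>) has_derivative (\<lambda>w. N x / D x * (a w - b w))) (at x)"
  using has_derivative_divide'[OF assms]
  by (rule has_derivative_eq_rhs) (use assms(3) in \<open>simp add: fun_eq_iff field_simps\<close>)

lemma hconj_gt_1: "p > 1 \<Longrightarrow> hconj p > 1"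
  unfolding hconj_def by (simp add: field_simps)

lemma hconj_div: "p > 1 \<Longrightarrow> hconj p / p = hconj p - 1"
  unfolding hconj_def by (simp add: field_simps)

lemma psi_pos: "z > 0 \<Longrightarrow> psi q z = z powr (q - 1)"
  unfolding psi_def by simp

lemma abs_psi_hconj_powr: "p > 1 \<Longrightarrow> z > 0 \<Longrightarrow> \<bar>psi (hconj p) z\<bar> powr p = z powr hconj p"
  unfolding psi_def hconj_def by (simp add: powr_powr field_simps)

definition lp_norm :: "real \<Rightarrow> ('i::finite \<Rightarrow> real) \<Rightarrow> real" where
  "lp_norm p v = (\<Sum>t\<in>UNIV. \<bar>v t\<bar> powr p) powr (1 / p)"

text \<open>The components of G for one block of coordinates (a row of w, or u), in which the
  partial derivatives of the objective are g t.\<close>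
definition dual_normalized ::
    "real \<Rightarrow> real \<Rightarrow> ('i::finite \<Rightarrow> 'a \<Rightarrow> real) \<Rightarrow> 'i \<Rightarrow> 'a \<Rightarrow> real" where
  "dual_normalized p \<rho> g j \<eta> = \<rho> * psi (hconj p) (g j \<eta>) / lp_norm p (\<lambda>t. psi (hconj p) (g t \<eta>))"

lemma lp_norm_psi_pos:
  assumes "p > 1" "\<And>t. v t > 0"
  shows "lp_norm p (\<lambda>t. psi (hconj p) (v t)) > 0"
proof -
  have "v t \<noteq> 0" for t using assms(2)[of t] by simp
  then have "(\<Sum>t\<in>UNIV. \<bar>psi (hconj p) (v t)\<bar> powr p) > 0"
    using assms by (intro sum_pos) (auto simp: abs_psi_hconj_powr)
  then show ?thesis unfolding lp_norm_def by simp
qed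

lemma dual_normalized_pos:
  assumes "p > 1" "\<rho> > 0" "\<And>t. g t \<eta> > 0"
  shows "dual_normalized p \<rho> g j \<eta> > 0"
  using lp_norm_psi_pos[OF assms(1), of "\<lambda>t. g t \<eta>"] assms
  unfolding dual_normalized_def by (simp add: psi_pos less_imp_neq[symmetric])

lemma has_derivative_dual_normalized:
  fixes g :: "'i::finite \<Rightarrow> 'a::real_normed_vector \<Rightarrow> real"
  assumes p: "p > 1" and g: "\<And>t. (g t has_derivative g' t) (at th)" and pos: "\<And>t. g t th > 0"
  defines "q \<equiv> hconj p"
  defines "\<pi> \<equiv> \<lambda>t. g t th powr q / (\<Sum>u\<in>UNIV. g u th powr q)"
  shows "(dual_normalized p \<rho> g j has_derivative (\<lambda>w. dual_normalized p \<rho> g j th * (q - 1) *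
           (g' j w / g j th - (\<Sum>t\<in>UNIV. \<pi> t * (g' t w / g t th))))) (at th)"
proof -
  have q: "q / p = q - 1" unfolding q_def using hconj_div[OF p] .
  define N where "N \<eta> = \<rho> * psi q (g j \<eta>)" for \<eta>
  define S where "S \<eta> = (\<Sum>t\<in>UNIV. \<bar>psi q (g t \<eta>)\<bar> powr p)" for \<eta>
  have S_th: "S th = (\<Sum>t\<in>UNIV. g t th powr q)"
    unfolding S_def q_def using p pos by (simp add: abs_psi_hconj_powr)
  have S_pos: "S th > 0"
    unfolding S_th using pos by (intro sum_pos) (auto simp: less_imp_neq[symmetric])
  have D_pos: "lp_norm p (\<lambda>t. psi q (g t th)) > 0"
    unfolding q_def using lp_norm_psi_pos[OF p pos] .
  have N: "(N has_derivative (\<lambda>w. N th * ((q - 1) * (g' j w / g j th)))) (at th)"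
  proof -
    have "(psi q has_real_derivative (q - 1) * g j th powr (q - 1) / g j th) (at (g j th))"
      using pos by (intro has_real_derivative_powr_on_pos) (auto simp: psi_pos)
    from has_derivative_mult_right[OF has_derivative_real_compose[OF this g], of \<rho>]
    show ?thesis unfolding N_def using pos[of j] by (simp add: psi_pos algebra_simps)
  qed
  have S: "(S has_derivative (\<lambda>w. \<Sum>t\<in>UNIV. q * g t th powr q / g t th * g' t w)) (at th)"
  proof -
    have "((\<lambda>z. \<bar>psi q z\<bar> powr p) has_real_derivative q * g t th powr q / g t th) (at (g t th))" for t
      using pos p unfolding q_def by (intro has_real_derivative_powr_on_pos) (auto simp: abs_psi_hconj_powr)
    then show ?thesis
      unfolding S_def by (intro has_derivative_sum has_derivative_real_compose g)
  qed
  have D: "((\<lambda>\<eta>. lp_norm p (\<lambda>t. psi q (g t \<eta>))) has_derivative (\<lambda>w.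
        lp_norm p (\<lambda>t. psi q (g t th)) * ((q - 1) * (\<Sum>t\<in>UNIV. \<pi> t * (g' t w / g t th))))) (at th)"
  proof -
    have "((\<lambda>s. s powr (1 / p)) has_real_derivative 1 / p * S th powr (1 / p) / S th) (at (S th))"
      using S_pos by (intro has_real_derivative_powr_on_pos) auto
    from has_derivative_real_compose[OF this S]
    have "((\<lambda>\<eta>. S \<eta> powr (1 / p)) has_derivative (\<lambda>w. S th powr (1 / p) *
        (q / p * (\<Sum>t\<in>UNIV. g t th powr q / S th * (g' t w / g t th))))) (at th)"
      by (simp add: sum_distrib_left sum_divide_distrib algebra_simps)
    then show ?thesis
      unfolding \<pi>_def lp_norm_def S_def[symmetric] S_th[symmetric] q .
  qed
  from has_derivative_divide_logarithmic[OF N D] D_pos show ?thesis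
    unfolding dual_normalized_def N_def q_def[symmetric]
    by (auto elim!: has_derivative_eq_rhs simp: fun_eq_iff field_simps)
qed

lemma weighted_abs_deviation_le:
  fixes \<sigma> :: "'k::finite \<Rightarrow> real" and a :: "'s \<Rightarrow> 'k \<Rightarrow> real"
  assumes \<sigma>_nonneg: "\<And>q. \<sigma> q \<ge> 0" and \<sigma>_sum: "(\<Sum>q\<in>UNIV. \<sigma> q) = 1"
    and \<omega>_nonneg: "\<And>s. s \<in> I \<Longrightarrow> \<omega> s \<ge> 0"
    and bound: "\<And>q. (\<Sum>s\<in>I. \<omega> s * \<bar>a s q\<bar>) \<le> B"
  shows "(\<Sum>s\<in>I. \<omega> s * \<bar>a s r - (\<Sum>q\<in>UNIV. \<sigma> q * a s q)\<bar>) \<le> 2 * B * (1 - \<sigma> r)"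
proof -
  have deviation: "a s r - (\<Sum>q\<in>UNIV. \<sigma> q * a s q) = (\<Sum>q\<in>UNIV-{r}. \<sigma> q * (a s r - a s q))" for s
  proof -
    have "a s r - (\<Sum>q\<in>UNIV. \<sigma> q * a s q) = (\<Sum>q\<in>UNIV. \<sigma> q * (a s r - a s q))"
      using \<sigma>_sum by (simp add: sum_subtractf sum_distrib_right[symmetric] algebra_simps)
    also have "\<dots> = (\<Sum>q\<in>UNIV-{r}. \<sigma> q * (a s r - a s q))"
      by (rule sum.mono_neutral_right) auto
    finally show ?thesis .
  qed
  have "\<omega> s * \<bar>a s r - (\<Sum>q\<in>UNIV. \<sigma> q * a s q)\<bar>
      \<le> (\<Sum>q\<in>UNIV-{r}. \<sigma> q * (\<omega> s * \<bar>a s r\<bar> + \<omega> s * \<bar>a s q\<bar>))" if "s \<in> I" for s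
  proof -
    have "\<bar>\<Sum>q\<in>UNIV-{r}. \<sigma> q * (a s r - a s q)\<bar> \<le> (\<Sum>q\<in>UNIV-{r}. \<sigma> q * (\<bar>a s r\<bar> + \<bar>a s q\<bar>))"
      using \<sigma>_nonneg by (intro order.trans[OF sum_abs] sum_mono)
        (simp add: abs_mult mult_left_mono abs_triangle_ineq4)
    from mult_left_mono[OF this \<omega>_nonneg[OF that]] show ?thesis
      unfolding deviation by (simp add: sum_distrib_left algebra_simps)
  qed
  then have "(\<Sum>s\<in>I. \<omega> s * \<bar>a s r - (\<Sum>q\<in>UNIV. \<sigma> q * a s q)\<bar>)
      \<le> (\<Sum>s\<in>I. \<Sum>q\<in>UNIV-{r}. \<sigma> q * (\<omega> s * \<bar>a s r\<bar> + \<omega> s * \<bar>a s q\<bar>))"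
    by (rule sum_mono)
  also have "\<dots> = (\<Sum>q\<in>UNIV-{r}. \<Sum>s\<in>I. \<sigma> q * (\<omega> s * \<bar>a s r\<bar> + \<omega> s * \<bar>a s q\<bar>))"
    by (rule sum.swap)
  also have "\<dots> = (\<Sum>q\<in>UNIV-{r}. \<sigma> q * ((\<Sum>s\<in>I. \<omega> s * \<bar>a s r\<bar>) + (\<Sum>s\<in>I. \<omega> s * \<bar>a s q\<bar>)))"
    by (simp add: distrib_left sum.distrib sum_distrib_left)
  also have "\<dots> \<le> (\<Sum>q\<in>UNIV-{r}. \<sigma> q * (2 * B))"
    using bound \<sigma>_nonneg by (intro sum_mono mult_left_mono) (auto intro: add_mono[of _ B _ B, simplified])
  also have "\<dots> = 2 * B * (1 - \<sigma> r)"
    using \<sigma>_sum sum_diff1[of UNIV \<sigma> r] by (simp add: sum_distrib_right[symmetric] mult.commute)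
  finally show ?thesis .
qed

lemma dual_normalized_derivative_bound:
  fixes g :: "'i::finite \<Rightarrow> 'a::real_normed_vector \<Rightarrow> real" and w :: "'s \<Rightarrow> 'a"
  assumes p: "p > 1" and \<rho>: "\<rho> > 0" and g: "\<And>t. (g t has_derivative g' t) (at th)"
    and pos: "\<And>t. g t th > 0" and \<omega>_nonneg: "\<And>s. s \<in> I \<Longrightarrow> \<omega> s \<ge> 0" and B: "B \<ge> 0"
    and bound: "\<And>t. (\<Sum>s\<in>I. \<omega> s * \<bar>g' t (w s)\<bar>) \<le> B * g t th"
  shows "(\<Sum>s\<in>I. \<bar>pd (dual_normalized p \<rho> g j) th (w s)\<bar> * \<omega> s)
    \<le> 2 * (hconj p - 1) * B * dual_normalized p \<rho> g j th"
proof -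
  define q where "q = hconj p"
  define F where "F = dual_normalized p \<rho> g j th"
  define \<pi> where "\<pi> t = g t th powr q / (\<Sum>u\<in>UNIV. g u th powr q)" for t
  define a where "a s t = g' t (w s) / g t th" for s t
  have q: "q > 1" unfolding q_def using hconj_gt_1[OF p] .
  have F: "F > 0" unfolding F_def using dual_normalized_pos[of p \<rho> g, OF p \<rho> pos] .
  have "(\<Sum>u\<in>UNIV. g u th powr q) > 0"
    using pos by (intro sum_pos) (auto simp: less_imp_neq[symmetric])
  then have \<pi>_nonneg: "\<pi> t \<ge> 0" and \<pi>_sum: "(\<Sum>t\<in>UNIV. \<pi> t) = 1" for t
    unfolding \<pi>_def by (simp_all add: sum_divide_distrib[symmetric])
  have a_bound: "(\<Sum>s\<in>I. \<omega> s * \<bar>a s t\<bar>) \<le> B" for t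
    using bound[of t] pos[of t]
    by (simp add: a_def sum_divide_distrib[symmetric] divide_le_eq mult.commute)
  have "pd (dual_normalized p \<rho> g j) th (w s) = F * (q - 1) * (a s j - (\<Sum>t\<in>UNIV. \<pi> t * a s t))" for s
    using pd_eq[OF has_derivative_dual_normalized[OF p g pos]]
    unfolding F_def q_def \<pi>_def a_def by simp
  then have "(\<Sum>s\<in>I. \<bar>pd (dual_normalized p \<rho> g j) th (w s)\<bar> * \<omega> s)
      = F * (q - 1) * (\<Sum>s\<in>I. \<omega> s * \<bar>a s j - (\<Sum>t\<in>UNIV. \<pi> t * a s t)\<bar>)"
    using F q by (simp add: sum_distrib_left abs_mult mult_ac)
  also have "\<dots> \<le> F * (q - 1) * (2 * B * (1 - \<pi> j))"
    using F q by (intro mult_left_mono weighted_abs_deviation_le \<pi>_nonneg \<pi>_sum \<omega>_nonneg a_bound) auto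
  also have "\<dots> \<le> F * (q - 1) * (2 * B)"
    using F q B \<pi>_nonneg[of j] by (intro mult_left_mono) (auto simp: mult_left_le)
  finally show ?thesis unfolding F_def q_def by (simp add: algebra_simps)
qed

section \<open>Softmax and the cross-entropy term\<close>

definition softmax :: "('k::finite \<Rightarrow> real) \<Rightarrow> 'k \<Rightarrow> real" where
  "softmax z r = exp (z r) / (\<Sum>j\<in>UNIV. exp (z j))"

definition sample_grad :: "'k::finite \<Rightarrow> ('k \<Rightarrow> real) \<Rightarrow> 'k \<Rightarrow> real" where
  "sample_grad yl z r = of_bool (r = yl) + 1 - softmax z r"

lemma softmax_nonneg: "softmax z r \<ge> 0"
  unfolding softmax_def by (simp add: sum_nonneg)

lemma sum_softmax: "(\<Sum>r\<in>UNIV. softmax z r) = 1"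
proof -
  have "(\<Sum>j\<in>UNIV. exp (z j)) > 0" by (rule sum_pos) auto
  then show ?thesis unfolding softmax_def by (simp add: sum_divide_distrib[symmetric])
qed

lemma softmax_le_1: "softmax z r \<le> 1"
  using member_le_sum[of r UNIV "softmax z"] softmax_nonneg[of z] sum_softmax[of z] by simp

lemma sample_grad_ge: "sample_grad yl z r \<ge> 1 - softmax z r"
  unfolding sample_grad_def by simp

lemma sample_grad_nonneg: "sample_grad yl z r \<ge> 0"
  using sample_grad_ge[of z r yl] softmax_le_1[of z r] by linarith

lemma has_derivative_sum_exp:
  fixes F :: "'k::finite \<Rightarrow> 'a::real_normed_vector \<Rightarrow> real"
  assumes "\<And>r. (F r has_derivative F' r) (at \<eta>)"
  shows "((\<lambda>\<eta>. \<Sum>j\<in>UNIV. exp (F j \<eta>)) has_derivative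
           (\<lambda>v. (\<Sum>j\<in>UNIV. exp (F j \<eta>)) * (\<Sum>q\<in>UNIV. softmax (\<lambda>r. F r \<eta>) q * F' q v))) (at \<eta>)"
proof -
  have "(\<Sum>j\<in>UNIV. exp (F j \<eta>)) > 0" by (rule sum_pos) auto
  with has_derivative_sum[OF has_derivative_real_compose[OF DERIV_exp assms]] show ?thesis
    unfolding softmax_def
    by (auto elim!: has_derivative_eq_rhs simp: fun_eq_iff sum_distrib_left sum_divide_distrib)
qed

lemma has_derivative_softmax:
  fixes F :: "'k::finite \<Rightarrow> 'a::real_normed_vector \<Rightarrow> real"
  assumes "\<And>r. (F r has_derivative F' r) (at \<eta>)"
  shows "((\<lambda>\<eta>. softmax (\<lambda>r. F r \<eta>) r) has_derivative
     (\<lambda>w. softmax (\<lambda>r. F r \<eta>) r * (F' r w - (\<Sum>q\<in>UNIV. softmax (\<lambda>r. F r \<eta>) q * F' q w)))) (at \<eta>)"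
proof -
  have "(\<Sum>j\<in>UNIV. exp (F j \<eta>)) > 0" by (rule sum_pos) auto
  moreover have "((\<lambda>\<eta>. exp (F r \<eta>)) has_derivative (\<lambda>w. exp (F r \<eta>) * F' r w)) (at \<eta>)"
    using has_derivative_real_compose[OF DERIV_exp assms] .
  ultimately show ?thesis
    using has_derivative_divide_logarithmic[OF _ has_derivative_sum_exp[of F F' \<eta>, OF assms]]
    unfolding softmax_def by simp
qed

lemma has_derivative_sample_grad:
  fixes F :: "'k::finite \<Rightarrow> 'a::real_normed_vector \<Rightarrow> real"
  assumes "\<And>r. (F r has_derivative F' r) (at \<eta>)"
  shows "((\<lambda>\<eta>. sample_grad yl (\<lambda>r. F r \<eta>) r) has_derivative
     (\<lambda>w. - softmax (\<lambda>r. F r \<eta>) r * (F' r w - (\<Sum>q\<in>UNIV. softmax (\<lambda>r. F r \<eta>) q * F' q w)))) (at \<eta>)"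
  unfolding sample_grad_def
  using has_derivative_diff[OF has_derivative_const has_derivative_softmax[of F F' \<eta>, OF assms]] by simp

lemma has_derivative_sample_term:
  fixes F :: "'k::finite \<Rightarrow> 'a::real_normed_vector \<Rightarrow> real"
  assumes "\<And>r. (F r has_derivative F' r) (at \<eta>)"
  shows "((\<lambda>\<eta>. - CE_loss yl (\<lambda>r. F r \<eta>) + (\<Sum>r\<in>UNIV. F r \<eta>)) has_derivative
           (\<lambda>v. \<Sum>r\<in>UNIV. sample_grad yl (\<lambda>r. F r \<eta>) r * F' r v)) (at \<eta>)"
proof -
  have "(\<Sum>j\<in>UNIV. exp (F j \<eta>)) > 0" by (rule sum_pos) auto
  then have "((\<lambda>\<eta>. ln (\<Sum>j\<in>UNIV. exp (F j \<eta>))) has_derivative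
      (\<lambda>v. \<Sum>q\<in>UNIV. softmax (\<lambda>r. F r \<eta>) q * F' q v)) (at \<eta>)"
    using has_derivative_real_compose[OF DERIV_ln has_derivative_sum_exp[of F F' \<eta>, OF assms]]
    by (simp add: mult.assoc[symmetric])
  moreover have "((\<lambda>\<eta>. \<Sum>r\<in>UNIV. F r \<eta>) has_derivative (\<lambda>v. \<Sum>r\<in>UNIV. F' r v)) (at \<eta>)"
    by (intro has_derivative_sum assms)
  ultimately have "((\<lambda>\<eta>. F yl \<eta> - ln (\<Sum>j\<in>UNIV. exp (F j \<eta>)) + (\<Sum>r\<in>UNIV. F r \<eta>)) has_derivative
      (\<lambda>v. F' yl v - (\<Sum>q\<in>UNIV. softmax (\<lambda>r. F r \<eta>) q * F' q v) + (\<Sum>r\<in>UNIV. F' r v))) (at \<eta>)"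
    by (intro has_derivative_add has_derivative_diff assms)
  then show ?thesis
    unfolding CE_loss_def sample_grad_def
    by (auto elim!: has_derivative_eq_rhs
        simp: fun_eq_iff algebra_simps sum.distrib sum_subtractf sum_mult_of_bool_eq)
qed

lemma softmax_deviation_term_bound:
  fixes \<sigma> c d :: "'k::finite \<Rightarrow> real" and D :: "'s \<Rightarrow> 'k \<Rightarrow> real"
  assumes \<sigma>_nonneg: "\<And>r. \<sigma> r \<ge> 0" and \<sigma>_sum: "(\<Sum>r\<in>UNIV. \<sigma> r) = 1"
    and c: "c r \<ge> 1 - \<sigma> r" and d_nonneg: "d r \<ge> 0"
    and D_nonneg: "\<And>s r. s \<in> I \<Longrightarrow> D s r \<ge> 0" and \<omega>_nonneg: "\<And>s. s \<in> I \<Longrightarrow> \<omega> s \<ge> 0"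
    and C: "C \<ge> 0" and bound_D: "\<And>r. (\<Sum>s\<in>I. \<omega> s * D s r) \<le> C"
  shows "\<sigma> r * d r * (\<Sum>s\<in>I. \<omega> s * \<bar>D s r - (\<Sum>q\<in>UNIV. \<sigma> q * D s q)\<bar>) \<le> 2 * C * (c r * d r)"
proof -
  have "(\<Sum>s\<in>I. \<omega> s * \<bar>D s q\<bar>) = (\<Sum>s\<in>I. \<omega> s * D s q)" for q
    using D_nonneg by (intro sum.cong) auto
  then have "(\<Sum>s\<in>I. \<omega> s * \<bar>D s q\<bar>) \<le> C" for q
    using bound_D[of q] by simp
  then have "(\<Sum>s\<in>I. \<omega> s * \<bar>D s r - (\<Sum>q\<in>UNIV. \<sigma> q * D s q)\<bar>) \<le> 2 * C * (1 - \<sigma> r)"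
    by (intro weighted_abs_deviation_le \<sigma>_nonneg \<sigma>_sum \<omega>_nonneg)
  from mult_left_mono[OF this mult_nonneg_nonneg[OF \<sigma>_nonneg d_nonneg]]
  have "\<sigma> r * d r * (\<Sum>s\<in>I. \<omega> s * \<bar>D s r - (\<Sum>q\<in>UNIV. \<sigma> q * D s q)\<bar>)
      \<le> 2 * C * (\<sigma> r * (1 - \<sigma> r) * d r)"
    by (simp add: mult_ac)
  also have "\<dots> \<le> 2 * C * (c r * d r)"
  proof -
    have "\<sigma> r \<le> 1" using member_le_sum[of r UNIV \<sigma>] \<sigma>_nonneg \<sigma>_sum by simp
    then have "\<sigma> r * (1 - \<sigma> r) \<le> c r"
      using c \<sigma>_nonneg[of r] mult_left_le_one_le[of "1 - \<sigma> r" "\<sigma> r"] by linarith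
    then show ?thesis using C d_nonneg by (intro mult_left_mono mult_right_mono) auto
  qed
  finally show ?thesis .
qed

lemma softmax_hessian_term_bound:
  fixes \<sigma> c d :: "'k::finite \<Rightarrow> real" and D e :: "'s \<Rightarrow> 'k \<Rightarrow> real"
  assumes \<sigma>_nonneg: "\<And>r. \<sigma> r \<ge> 0" and \<sigma>_sum: "(\<Sum>r\<in>UNIV. \<sigma> r) = 1"
    and c: "\<And>r. c r \<ge> 1 - \<sigma> r" and d_nonneg: "\<And>r. d r \<ge> 0"
    and D_nonneg: "\<And>s r. s \<in> I \<Longrightarrow> D s r \<ge> 0" and e_nonneg: "\<And>s r. s \<in> I \<Longrightarrow> e s r \<ge> 0"
    and \<omega>_nonneg: "\<And>s. s \<in> I \<Longrightarrow> \<omega> s \<ge> 0" and C: "C \<ge> 0"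
    and bound_D: "\<And>r. (\<Sum>s\<in>I. \<omega> s * D s r) \<le> C"
    and bound_e: "\<And>r. (\<Sum>s\<in>I. \<omega> s * e s r) \<le> M * d r"
  shows "(\<Sum>s\<in>I. \<omega> s * \<bar>\<Sum>r\<in>UNIV. c r * e s r - \<sigma> r * (D s r - (\<Sum>q\<in>UNIV. \<sigma> q * D s q)) * d r\<bar>)
     \<le> (2 * C + M) * (\<Sum>r\<in>UNIV. c r * d r)"
proof -
  define dev where "dev s r = \<bar>D s r - (\<Sum>q\<in>UNIV. \<sigma> q * D s q)\<bar>" for s r
  have c_nonneg: "c r \<ge> 0" for r
    using c[of r] member_le_sum[of r UNIV \<sigma>] \<sigma>_nonneg \<sigma>_sum by simp
  have "\<omega> s * \<bar>\<Sum>r\<in>UNIV. c r * e s r - \<sigma> r * (D s r - (\<Sum>q\<in>UNIV. \<sigma> q * D s q)) * d r\<bar>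
      \<le> \<omega> s * (\<Sum>r\<in>UNIV. c r * e s r + \<sigma> r * d r * dev s r)" if s: "s \<in> I" for s
    using c_nonneg e_nonneg[OF s] \<sigma>_nonneg d_nonneg
    by (intro mult_left_mono[OF _ \<omega>_nonneg[OF s]] order.trans[OF sum_abs] sum_mono
        order.trans[OF abs_triangle_ineq4]) (simp add: dev_def abs_mult mult_ac)
  then have "(\<Sum>s\<in>I. \<omega> s * \<bar>\<Sum>r\<in>UNIV. c r * e s r - \<sigma> r * (D s r - (\<Sum>q\<in>UNIV. \<sigma> q * D s q)) * d r\<bar>)
      \<le> (\<Sum>s\<in>I. \<Sum>r\<in>UNIV. c r * (\<omega> s * e s r) + \<sigma> r * d r * (\<omega> s * dev s r))"
    by (intro sum_mono) (simp add: sum_distrib_left algebra_simps)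
  also have "\<dots> = (\<Sum>r\<in>UNIV. \<Sum>s\<in>I. c r * (\<omega> s * e s r) + \<sigma> r * d r * (\<omega> s * dev s r))"
    by (rule sum.swap)
  also have "\<dots> = (\<Sum>r\<in>UNIV. c r * (\<Sum>s\<in>I. \<omega> s * e s r) + \<sigma> r * d r * (\<Sum>s\<in>I. \<omega> s * dev s r))"
    by (simp add: sum.distrib sum_distrib_left)
  also have "\<dots> \<le> (\<Sum>r\<in>UNIV. M * (c r * d r) + 2 * C * (c r * d r))"
    using mult_left_mono[OF bound_e c_nonneg] unfolding dev_def
    by (intro sum_mono add_mono softmax_deviation_term_bound assms) (simp_all add: mult_ac)
  also have "\<dots> = (2 * C + M) * (\<Sum>r\<in>UNIV. c r * d r)"
    by (simp add: sum_distrib_left algebra_simps)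
  finally show ?thesis .
qed

section \<open>The objective\<close>

definition coord_sum :: "('k::finite,'h::finite,'d::finite) param \<Rightarrow> real" where
  "coord_sum v = (\<Sum>r\<in>UNIV. \<Sum>l\<in>UNIV. fst v $ r $ l) + (\<Sum>l\<in>UNIV. \<Sum>m\<in>UNIV. snd v $ l $ m)"

lemma has_derivative_coord_sum: "(coord_sum has_derivative coord_sum) (at \<eta>)"
proof -
  have "bounded_linear (\<lambda>v::('k::finite,'h::finite,'d::finite) param. fst v $ r $ l)"
    "bounded_linear (\<lambda>v::('k,'h,'d) param. snd v $ l $ m)" for r l m
    by (intro bounded_linear_compose[OF bounded_linear_vec_nth] bounded_linear_fst bounded_linear_snd)+
  then show ?thesis unfolding coord_sum_def[abs_def]
    by (intro has_derivative_add has_derivative_sum bounded_linear_imp_has_derivative)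
qed

lemma sum_axis_axis: "(\<Sum>l\<in>UNIV. axis s (axis t (1::real)) $ r $ l) = of_bool (r = s)"
  by (cases "r = s") (simp_all add: axis_def)

lemma coord_sum_dirW: "coord_sum (dirW s t) = 1"
  unfolding coord_sum_def dirW_def by (simp add: sum_axis_axis)

lemma coord_sum_dirU: "coord_sum (dirU a b) = 1"
  unfolding coord_sum_def dirU_def by (simp add: sum_axis_axis)

lemma dirW_in_Basis: "dirW s t \<in> Basis"
  unfolding dirW_def by (auto simp: Basis_prod_def Basis_vec_def)

lemma dirU_in_Basis: "dirU a b \<in> Basis"
  unfolding dirU_def Basis_prod_def by (rule UnI2) (auto simp: Basis_vec_def)

lemma GW_eq_dual_normalized: "GW p \<rho> \<Phi> i j = dual_normalized p \<rho> (\<lambda>t \<eta>. pd \<Phi> \<eta> (dirW i t)) j"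
  by (simp add: fun_eq_iff GW_def denomW_def dual_normalized_def pnorm_row_def lp_norm_def)

lemma denomW_eq_lp_norm: "denomW p \<Phi> i th = lp_norm p (\<lambda>t. psi (hconj p) (pd \<Phi> th (dirW i t)))"
  by (simp add: denomW_def pnorm_row_def lp_norm_def)

lemma GU_eq_dual_normalized:
  "GU p \<rho> \<Phi> a b = dual_normalized p \<rho> (\<lambda>t \<eta>. pd \<Phi> \<eta> (case_prod dirU t)) (a, b)"
  by (simp add: fun_eq_iff GU_def denomU_def dual_normalized_def pnorm_mat_def lp_norm_def
      sum.cartesian_product case_prod_beta)

lemma denomU_eq_lp_norm: "denomU p \<Phi> th = lp_norm p (\<lambda>t. psi (hconj p) (pd \<Phi> th (case_prod dirU t)))"
  by (simp add: denomU_def pnorm_mat_def lp_norm_def sum.cartesian_product case_prod_beta)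

lemma sum_UNIV_pair: "(\<Sum>t\<in>UNIV. g t) = (\<Sum>a\<in>UNIV. \<Sum>b\<in>UNIV. g (a, b))"
  using sum.cartesian_product'[of g UNIV UNIV] by simp

locale monotone_objective =
  fixes f :: "'k::finite \<Rightarrow> real^'d::finite \<Rightarrow> ('k,'h::finite,'d) param \<Rightarrow> real"
    and x :: "nat \<Rightarrow> real^'d" and y :: "nat \<Rightarrow> 'k" and n :: nat and \<epsilon> :: real
    and S :: "('k,'h,'d) param set"
  assumes eps_pos: "\<epsilon> > 0" and S_open: "open S"
    and f_C2: "\<forall>r. \<forall>i<n. C2_on S (f r (x i))"
    and f_d1_nonneg: "\<forall>r. \<forall>i<n. \<forall>th\<in>S. \<forall>v\<in>Basis. pd (f r (x i)) th v \<ge> 0"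
    and f_d2_nonneg: "\<forall>r. \<forall>i<n. \<forall>th\<in>S. \<forall>v1\<in>Basis. \<forall>v2\<in>Basis. pd2 (f r (x i)) th v1 v2 \<ge> 0"
begin

definition grad :: "('k,'h,'d) param \<Rightarrow> ('k,'h,'d) param \<Rightarrow> real" where
  "grad v \<eta> = (1 / real n) * (\<Sum>l<n. \<Sum>r\<in>UNIV.
      sample_grad (y l) (\<lambda>r. f r (x l) \<eta>) r * pd (f r (x l)) \<eta> v) + \<epsilon> * coord_sum v"

definition hess :: "('k,'h,'d) param \<Rightarrow> ('k,'h,'d) param \<Rightarrow> ('k,'h,'d) param \<Rightarrow> real" where
  "hess v th w = (1 / real n) * (\<Sum>l<n. \<Sum>r\<in>UNIV.
      sample_grad (y l) (\<lambda>r. f r (x l) th) r * pd2 (f r (x l)) th v w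
      - softmax (\<lambda>r. f r (x l) th) r *
          (pd (f r (x l)) th w - (\<Sum>q\<in>UNIV. softmax (\<lambda>r. f r (x l) th) q * pd (f q (x l)) th w))
        * pd (f r (x l)) th v)"

lemma differentiable_f: "\<eta> \<in> S \<Longrightarrow> l < n \<Longrightarrow> f r (x l) differentiable (at \<eta>)"
  using f_C2 unfolding C2_on_def by blast

lemma pd_Phi: "\<eta> \<in> S \<Longrightarrow> pd (Phi f x y n \<epsilon>) \<eta> v = grad v \<eta>"
proof -
  assume \<eta>: "\<eta> \<in> S"
  have "((\<lambda>\<eta>. - CE_loss (y l) (\<lambda>r. f r (x l) \<eta>) + (\<Sum>r\<in>UNIV. f r (x l) \<eta>)) has_derivative
      (\<lambda>v. \<Sum>r\<in>UNIV. sample_grad (y l) (\<lambda>r. f r (x l) \<eta>) r * pd (f r (x l)) \<eta> v)) (at \<eta>)"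
    if "l \<in> {..<n}" for l
    using that \<eta> by (intro has_derivative_sample_term has_derivative_pd differentiable_f) auto
  then have "(Phi f x y n \<epsilon> has_derivative (\<lambda>v. grad v \<eta>)) (at \<eta>)"
    unfolding Phi_def[abs_def] grad_def coord_sum_def[symmetric]
    by (intro has_derivative_add has_derivative_mult_right has_derivative_sum has_derivative_coord_sum)
  then show ?thesis by (rule pd_eq)
qed

lemma has_derivative_grad:
  assumes th: "th \<in> S" and v: "v \<in> Basis"
  shows "(grad v has_derivative hess v th) (at th)"
proof -
  have "((\<lambda>\<eta>. sample_grad (y l) (\<lambda>r. f r (x l) \<eta>) r * pd (f r (x l)) \<eta> v) has_derivative (\<lambda>w.
      sample_grad (y l) (\<lambda>r. f r (x l) th) r * pd2 (f r (x l)) th v w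
      - softmax (\<lambda>r. f r (x l) th) r *
          (pd (f r (x l)) th w - (\<Sum>q\<in>UNIV. softmax (\<lambda>r. f r (x l) th) q * pd (f q (x l)) th w))
        * pd (f r (x l)) th v)) (at th)" if l: "l \<in> {..<n}" for l r
  proof -
    have f: "(f r (x l) has_derivative pd (f r (x l)) th) (at th)" for r
      using l th by (intro has_derivative_pd differentiable_f) auto
    have "((\<lambda>\<eta>. pd (f r (x l)) \<eta> v) has_derivative pd2 (f r (x l)) th v) (at th)"
      unfolding pd2_def[abs_def] using f_C2 l th v by (intro has_derivative_pd) (auto simp: C2_on_def)
    from has_derivative_mult[OF has_derivative_sample_grad[of "\<lambda>r. f r (x l)", OF f] this]
    show ?thesis by (simp add: algebra_simps)
  qed
  then show ?thesis
    unfolding grad_def[abs_def] hess_def[abs_def]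
    by (intro has_derivative_add[where g'="\<lambda>_. 0", simplified] has_derivative_mult_right
        has_derivative_sum has_derivative_const)
qed

lemma grad_pos:
  assumes "th \<in> S" "v \<in> Basis" "coord_sum v = 1"
  shows "grad v th > 0"
proof -
  have "(\<Sum>l<n. \<Sum>r\<in>UNIV. sample_grad (y l) (\<lambda>r. f r (x l) th) r * pd (f r (x l)) th v) \<ge> 0"
    using f_d1_nonneg assms by (intro sum_nonneg mult_nonneg_nonneg sample_grad_nonneg) auto
  then show ?thesis unfolding grad_def using eps_pos assms(3) by (simp add: add_nonneg_pos)
qed

lemma has_derivative_pd_Phi:
  assumes "th \<in> S" "v \<in> Basis"
  shows "((\<lambda>\<eta>. pd (Phi f x y n \<epsilon>) \<eta> v) has_derivative hess v th) (at th)"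
  using has_derivative_grad[OF assms] S_open assms(1)
  by (rule has_derivative_transform_within_open) (simp add: pd_Phi)

lemma hess_bound:
  assumes th: "th \<in> S" and v: "v \<in> Basis" "coord_sum v = 1"
    and w: "\<And>s. s \<in> I \<Longrightarrow> w s \<in> Basis" and \<omega>_nonneg: "\<And>s. s \<in> I \<Longrightarrow> \<omega> s \<ge> 0"
    and C: "C \<ge> 0" and M: "M \<ge> 0"
    and bound_C: "\<And>r l. l < n \<Longrightarrow> (\<Sum>s\<in>I. \<omega> s * pd (f r (x l)) th (w s)) \<le> C"
    and bound_M: "\<And>r l. l < n \<Longrightarrow> (\<Sum>s\<in>I. \<omega> s * pd2 (f r (x l)) th (w s) v) \<le> M * pd (f r (x l)) th v"
  shows "(\<Sum>s\<in>I. \<omega> s * \<bar>hess v th (w s)\<bar>) \<le> (2 * C + M) * grad v th"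
proof -
  define \<sigma> where "\<sigma> l = softmax (\<lambda>r. f r (x l) th)" for l
  define c where "c l = sample_grad (y l) (\<lambda>r. f r (x l) th)" for l
  define T where "T s l = (\<Sum>r\<in>UNIV. c l r * pd2 (f r (x l)) th v (w s)
      - \<sigma> l r * (pd (f r (x l)) th (w s) - (\<Sum>q\<in>UNIV. \<sigma> l q * pd (f q (x l)) th (w s)))
        * pd (f r (x l)) th v)" for s l
  have per_sample: "(\<Sum>s\<in>I. \<omega> s * \<bar>T s l\<bar>) \<le> (2 * C + M) * (\<Sum>r\<in>UNIV. c l r * pd (f r (x l)) th v)"
    if l: "l < n" for l
    unfolding T_def
  proof (rule softmax_hessian_term_bound)
    fix r
    have "(\<Sum>s\<in>I. \<omega> s * pd2 (f r (x l)) th v (w s)) = (\<Sum>s\<in>I. \<omega> s * pd2 (f r (x l)) th (w s) v)"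
      using pd2_commute[OF S_open _ th v(1)] f_C2 l w by (intro sum.cong) auto
    then show "(\<Sum>s\<in>I. \<omega> s * pd2 (f r (x l)) th v (w s)) \<le> M * pd (f r (x l)) th v"
      using bound_M[OF l, of r] by simp
  qed (use softmax_nonneg sum_softmax sample_grad_ge f_d1_nonneg f_d2_nonneg th v w \<omega>_nonneg C
         bound_C l in \<open>auto simp: \<sigma>_def c_def\<close>)
  have "(\<Sum>s\<in>I. \<omega> s * \<bar>hess v th (w s)\<bar>) \<le> (\<Sum>s\<in>I. (1 / real n) * (\<Sum>l<n. \<omega> s * \<bar>T s l\<bar>))"
  proof (rule sum_mono)
    fix s assume "s \<in> I"
    have "\<bar>hess v th (w s)\<bar> \<le> (1 / real n) * (\<Sum>l<n. \<bar>T s l\<bar>)"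
      unfolding hess_def T_def \<sigma>_def c_def by (simp add: abs_mult sum_abs divide_right_mono)
    from mult_left_mono[OF this \<omega>_nonneg[OF \<open>s \<in> I\<close>]]
    show "\<omega> s * \<bar>hess v th (w s)\<bar> \<le> (1 / real n) * (\<Sum>l<n. \<omega> s * \<bar>T s l\<bar>)"
      by (simp add: sum_distrib_left mult_ac)
  qed
  also have "\<dots> = (1 / real n) * (\<Sum>l<n. \<Sum>s\<in>I. \<omega> s * \<bar>T s l\<bar>)"
    by (simp only: sum_distrib_left[symmetric] sum.swap[of _ I])
  also have "\<dots> \<le> (2 * C + M) * ((1 / real n) * (\<Sum>l<n. \<Sum>r\<in>UNIV. c l r * pd (f r (x l)) th v))"
  proof -
    have "(\<Sum>l<n. \<Sum>s\<in>I. \<omega> s * \<bar>T s l\<bar>) \<le> (2 * C + M) * (\<Sum>l<n. \<Sum>r\<in>UNIV. c l r * pd (f r (x l)) th v)"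
      unfolding sum_distrib_left[of "2 * C + M" _ "{..<n}"] by (rule sum_mono) (simp add: per_sample)
    then show ?thesis by (simp add: divide_right_mono)
  qed
  also have "\<dots> \<le> (2 * C + M) * grad v th"
    using C M eps_pos v(2) by (intro mult_left_mono) (auto simp: grad_def c_def)
  finally show ?thesis .
qed

lemma pd_Phi_pos:
  assumes "th \<in> S" "v \<in> Basis" "coord_sum v = 1"
  shows "pd (Phi f x y n \<epsilon>) th v > 0"
  using grad_pos[OF assms] pd_Phi[OF assms(1)] by simp

lemma lp_norm_pd_Phi_pos:
  assumes "th \<in> S" "p > 1" "\<And>t. V t \<in> Basis" "\<And>t. coord_sum (V t) = 1"
  shows "lp_norm p (\<lambda>t. psi (hconj p) (pd (Phi f x y n \<epsilon>) th (V t))) > 0"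
  using assms by (intro lp_norm_psi_pos pd_Phi_pos)

lemma dual_normalized_pd_Phi_differentiable:
  assumes "th \<in> S" "p > 1" "\<And>t. V t \<in> Basis" "\<And>t. coord_sum (V t) = 1"
  shows "dual_normalized p \<rho> (\<lambda>t \<eta>. pd (Phi f x y n \<epsilon>) \<eta> (V t)) j differentiable (at th)"
  using has_derivative_dual_normalized[OF assms(2) has_derivative_pd_Phi pd_Phi_pos] assms
  unfolding differentiable_def by blast

lemma dual_normalized_pd_Phi_bound:
  assumes th: "th \<in> S" and p: "p > 1" and \<rho>: "\<rho> > 0"
    and V: "\<And>t. V t \<in> Basis" "\<And>t. coord_sum (V t) = 1"
    and w: "\<And>s. s \<in> I \<Longrightarrow> w s \<in> Basis" and \<omega>_nonneg: "\<And>s. s \<in> I \<Longrightarrow> \<omega> s \<ge> 0"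
    and C: "C \<ge> 0" and M: "M \<ge> 0"
    and bound_C: "\<And>r l. l < n \<Longrightarrow> (\<Sum>s\<in>I. \<omega> s * pd (f r (x l)) th (w s)) \<le> C"
    and bound_M: "\<And>r l t. l < n \<Longrightarrow>
      (\<Sum>s\<in>I. \<omega> s * pd2 (f r (x l)) th (w s) (V t)) \<le> M * pd (f r (x l)) th (V t)"
  shows "(\<Sum>s\<in>I. \<bar>pd (dual_normalized p \<rho> (\<lambda>t \<eta>. pd (Phi f x y n \<epsilon>) \<eta> (V t)) j) th (w s)\<bar> * \<omega> s)
    \<le> 2 * (hconj p - 1) * (2 * C + M) * dual_normalized p \<rho> (\<lambda>t \<eta>. pd (Phi f x y n \<epsilon>) \<eta> (V t)) j th"
proof (rule dual_normalized_derivative_bound[OF p \<rho> has_derivative_pd_Phi[OF th V(1)]])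
  show "(\<Sum>s\<in>I. \<omega> s * \<bar>hess (V t) th (w s)\<bar>) \<le> (2 * C + M) * pd (Phi f x y n \<epsilon>) th (V t)" for t
    using hess_bound[OF th V(1,2) w \<omega>_nonneg C M bound_C bound_M] pd_Phi[OF th] by simp
qed (use th V C M \<omega>_nonneg pd_Phi_pos in auto)

lemma GW_bounds:
  fixes B :: "('k,'h,'d) param set" and i k :: 'k and j :: 'h
  assumes pw: "pw > 1" and \<rho>w: "\<rho>w > 0" and B: "B \<subseteq> S" and th: "th \<in> B"
    and w_nonneg: "\<And>k t. fst th $ k $ t \<ge> 0" and u_nonneg: "\<And>a b. snd th $ a $ b \<ge> 0"
    and const_nonneg: "Cw \<ge> 0" "Cu \<ge> 0" "Mww \<ge> 0" "Mwu \<ge> 0"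
    and bound_Cw: "\<forall>i<n. \<forall>th\<in>B. \<forall>r s.
        (\<Sum>t\<in>UNIV. fst th $ s $ t * pd (f r (x i)) th (dirW s t)) \<le> Cw"
    and bound_Cu: "\<forall>i<n. \<forall>th\<in>B. \<forall>r.
        (\<Sum>a\<in>UNIV. \<Sum>b\<in>UNIV. snd th $ a $ b * pd (f r (x i)) th (dirU a b)) \<le> Cu"
    and bound_Mww: "\<forall>i<n. \<forall>th\<in>B. \<forall>r s q b'.
        (\<Sum>t\<in>UNIV. fst th $ s $ t * pd2 (f r (x i)) th (dirW s t) (dirW q b'))
          \<le> Mww * pd (f r (x i)) th (dirW q b')"
    and bound_Mwu: "\<forall>i<n. \<forall>th\<in>B. \<forall>r q b'.
        (\<Sum>a\<in>UNIV. \<Sum>b\<in>UNIV. snd th $ a $ b * pd2 (f r (x i)) th (dirU a b) (dirW q b'))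
          \<le> Mwu * pd (f r (x i)) th (dirW q b')"
  defines "F \<equiv> GW pw \<rho>w (Phi f x y n \<epsilon>) i j"
  shows "denomW pw (Phi f x y n \<epsilon>) i th \<noteq> 0" and "F differentiable (at th)"
    and "(\<Sum>t\<in>UNIV. \<bar>pd F th (dirW k t)\<bar> * fst th $ k $ t)
           \<le> Amat pw pu Cw Cu Mww Mwu Muw Muu (Some i) (Some k) * F th"
    and "(\<Sum>a\<in>UNIV. \<Sum>b\<in>UNIV. \<bar>pd F th (dirU a b)\<bar> * snd th $ a $ b)
           \<le> Amat pw pu Cw Cu Mww Mwu Muw Muu (Some i) None * F th"
proof -
  have thS: "th \<in> S" using B th by blast
  note V = dirW_in_Basis[of i] coord_sum_dirW[of i]
  show "denomW pw (Phi f x y n \<epsilon>) i th \<noteq> 0"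
    using lp_norm_pd_Phi_pos[where V="dirW i", OF thS pw V] by (simp add: denomW_eq_lp_norm)
  show "F differentiable (at th)"
    unfolding F_def GW_eq_dual_normalized
    by (rule dual_normalized_pd_Phi_differentiable[where V="dirW i", OF thS pw V])
  show "(\<Sum>t\<in>UNIV. \<bar>pd F th (dirW k t)\<bar> * fst th $ k $ t)
      \<le> Amat pw pu Cw Cu Mww Mwu Muw Muu (Some i) (Some k) * F th"
    using dual_normalized_pd_Phi_bound[where V="dirW i" and w="dirW k", OF thS pw \<rho>w V dirW_in_Basis
        w_nonneg const_nonneg(1,3) bound_Cw[rule_format, OF _ th] bound_Mww[rule_format, OF _ th]]
    unfolding F_def GW_eq_dual_normalized by (simp add: Amat_def)
  have "(\<Sum>s\<in>UNIV. \<bar>pd F th (case_prod dirU s)\<bar> * (case s of (a, b) \<Rightarrow> snd th $ a $ b))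
      \<le> 2 * (hconj pw - 1) * (2 * Cu + Mwu) * F th"
    unfolding F_def GW_eq_dual_normalized
    by (rule dual_normalized_pd_Phi_bound[where V="dirW i", OF thS pw \<rho>w V])
      (use dirU_in_Basis u_nonneg const_nonneg bound_Cu[rule_format, OF _ th]
          bound_Mwu[rule_format, OF _ th] in \<open>auto simp: sum_UNIV_pair\<close>)
  then show "(\<Sum>a\<in>UNIV. \<Sum>b\<in>UNIV. \<bar>pd F th (dirU a b)\<bar> * snd th $ a $ b)
      \<le> Amat pw pu Cw Cu Mww Mwu Muw Muu (Some i) None * F th"
    unfolding sum_UNIV_pair by (simp add: Amat_def)
qed

lemma GU_bounds:
  fixes B :: "('k,'h,'d) param set" and k :: 'k and a :: 'h and b :: 'd
  assumes pu: "pu > 1" and \<rho>u: "\<rho>u > 0" and B: "B \<subseteq> S" and th: "th \<in> B"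
    and w_nonneg: "\<And>k t. fst th $ k $ t \<ge> 0" and u_nonneg: "\<And>a b. snd th $ a $ b \<ge> 0"
    and const_nonneg: "Cw \<ge> 0" "Cu \<ge> 0" "Muw \<ge> 0" "Muu \<ge> 0"
    and bound_Cw: "\<forall>i<n. \<forall>th\<in>B. \<forall>r s.
        (\<Sum>t\<in>UNIV. fst th $ s $ t * pd (f r (x i)) th (dirW s t)) \<le> Cw"
    and bound_Cu: "\<forall>i<n. \<forall>th\<in>B. \<forall>r.
        (\<Sum>a\<in>UNIV. \<Sum>b\<in>UNIV. snd th $ a $ b * pd (f r (x i)) th (dirU a b)) \<le> Cu"
    and bound_Muw: "\<forall>i<n. \<forall>th\<in>B. \<forall>r s a' b''.
        (\<Sum>t\<in>UNIV. fst th $ s $ t * pd2 (f r (x i)) th (dirW s t) (dirU a' b''))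
          \<le> Muw * pd (f r (x i)) th (dirU a' b'')"
    and bound_Muu: "\<forall>i<n. \<forall>th\<in>B. \<forall>r a' b''.
        (\<Sum>a\<in>UNIV. \<Sum>b\<in>UNIV. snd th $ a $ b * pd2 (f r (x i)) th (dirU a b) (dirU a' b''))
          \<le> Muu * pd (f r (x i)) th (dirU a' b'')"
  defines "F \<equiv> GU pu \<rho>u (Phi f x y n \<epsilon>) a b"
  shows "denomU pu (Phi f x y n \<epsilon>) th \<noteq> 0" and "F differentiable (at th)"
    and "(\<Sum>t\<in>UNIV. \<bar>pd F th (dirW k t)\<bar> * fst th $ k $ t)
           \<le> Amat pw pu Cw Cu Mww Mwu Muw Muu None (Some k) * F th"
    and "(\<Sum>a\<in>UNIV. \<Sum>b\<in>UNIV. \<bar>pd F th (dirU a b)\<bar> * snd th $ a $ b)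
           \<le> Amat pw pu Cw Cu Mww Mwu Muw Muu None None * F th"
proof -
  have thS: "th \<in> S" using B th by blast
  have V: "case_prod dirU t \<in> Basis" "coord_sum (case_prod dirU t) = 1" for t
    by (simp_all add: case_prod_beta dirU_in_Basis coord_sum_dirU)
  show "denomU pu (Phi f x y n \<epsilon>) th \<noteq> 0"
    using lp_norm_pd_Phi_pos[where V="case_prod dirU", OF thS pu V] by (simp add: denomU_eq_lp_norm)
  show "F differentiable (at th)"
    unfolding F_def GU_eq_dual_normalized
    by (rule dual_normalized_pd_Phi_differentiable[where V="case_prod dirU", OF thS pu V])
  show "(\<Sum>t\<in>UNIV. \<bar>pd F th (dirW k t)\<bar> * fst th $ k $ t)
      \<le> Amat pw pu Cw Cu Mww Mwu Muw Muu None (Some k) * F th"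
    using dual_normalized_pd_Phi_bound[where V="case_prod dirU" and w="dirW k", OF thS pu \<rho>u V
        dirW_in_Basis w_nonneg const_nonneg(1,3) bound_Cw[rule_format, OF _ th]]
      bound_Muw[rule_format, OF _ th]
    unfolding F_def GU_eq_dual_normalized by (simp add: Amat_def case_prod_beta)
  have "(\<Sum>s\<in>UNIV. \<bar>pd F th (case_prod dirU s)\<bar> * (case s of (a, b) \<Rightarrow> snd th $ a $ b))
      \<le> 2 * (hconj pu - 1) * (2 * Cu + Muu) * F th"
    unfolding F_def GU_eq_dual_normalized
    by (rule dual_normalized_pd_Phi_bound[where V="case_prod dirU", OF thS pu \<rho>u V])
      (use dirU_in_Basis u_nonneg const_nonneg bound_Cu[rule_format, OF _ th]
          bound_Muu[rule_format, OF _ th] in \<open>auto simp: sum_UNIV_pair\<close>)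
  then show "(\<Sum>a\<in>UNIV. \<Sum>b\<in>UNIV. \<bar>pd F th (dirU a b)\<bar> * snd th $ a $ b)
      \<le> Amat pw pu Cw Cu Mww Mwu Muw Muu None None * F th"
    unfolding sum_UNIV_pair by (simp add: Amat_def)
qed

end

theorem mainTheorem10:
  fixes f :: "'k::finite \<Rightarrow> real^'d::finite \<Rightarrow> ('k,'h::finite,'d) param \<Rightarrow> real"
    and x :: "nat \<Rightarrow> real^'d" and y :: "nat \<Rightarrow> 'k" and n :: nat
    and \<epsilon> pw pu \<rho>w \<rho>u Cw Cu Mww Mwu Muw Muu :: real
    and S :: "('k,'h,'d) param set"
  assumes n_pos: "n > 0"
    and x_nonneg: "\<forall>i<n. \<forall>b. x i $ b \<ge> 0"
    and eps_pos: "\<epsilon> > 0"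
    and pw: "pw > 1" and pu: "pu > 1" and rhow: "\<rho>w > 0" and rhou: "\<rho>u > 0"
    and consts_pos: "Cw > 0" "Cu > 0" "Mww > 0" "Mwu > 0" "Muw > 0" "Muu > 0"
    and S_open: "open S" and S_nbhd: "Bpp pw pu \<rho>w \<rho>u \<subseteq> S"
    and f_C2: "\<forall>r. \<forall>i<n. C2_on S (f r (x i))"
    and f_d1_nonneg: "\<forall>r. \<forall>i<n. \<forall>th\<in>S. \<forall>v\<in>Basis. pd (f r (x i)) th v \<ge> 0"
    and f_d2_nonneg: "\<forall>r. \<forall>i<n. \<forall>th\<in>S. \<forall>v1\<in>Basis. \<forall>v2\<in>Basis. pd2 (f r (x i)) th v1 v2 \<ge> 0"
    and bound_Cw: "\<forall>i<n. \<forall>th\<in>Bpp pw pu \<rho>w \<rho>u. \<forall>r s.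
        (\<Sum>t\<in>UNIV. fst th $ s $ t * pd (f r (x i)) th (dirW s t)) \<le> Cw"
    and bound_Cu: "\<forall>i<n. \<forall>th\<in>Bpp pw pu \<rho>w \<rho>u. \<forall>r.
        (\<Sum>a\<in>UNIV. \<Sum>b\<in>UNIV. snd th $ a $ b * pd (f r (x i)) th (dirU a b)) \<le> Cu"
    and bound_Mww: "\<forall>i<n. \<forall>th\<in>Bpp pw pu \<rho>w \<rho>u. \<forall>r s q b'.
        (\<Sum>t\<in>UNIV. fst th $ s $ t * pd2 (f r (x i)) th (dirW s t) (dirW q b'))
          \<le> Mww * pd (f r (x i)) th (dirW q b')"
    and bound_Mwu: "\<forall>i<n. \<forall>th\<in>Bpp pw pu \<rho>w \<rho>u. \<forall>r q b'.
        (\<Sum>a\<in>UNIV. \<Sum>b\<in>UNIV. snd th $ a $ b * pd2 (f r (x i)) th (dirU a b) (dirW q b'))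
          \<le> Mwu * pd (f r (x i)) th (dirW q b')"
    and bound_Muw: "\<forall>i<n. \<forall>th\<in>Bpp pw pu \<rho>w \<rho>u. \<forall>r s a' b''.
        (\<Sum>t\<in>UNIV. fst th $ s $ t * pd2 (f r (x i)) th (dirW s t) (dirU a' b''))
          \<le> Muw * pd (f r (x i)) th (dirU a' b'')"
    and bound_Muu: "\<forall>i<n. \<forall>th\<in>Bpp pw pu \<rho>w \<rho>u. \<forall>r a' b''.
        (\<Sum>a\<in>UNIV. \<Sum>b\<in>UNIV. snd th $ a $ b * pd2 (f r (x i)) th (dirU a b) (dirU a' b''))
          \<le> Muu * pd (f r (x i)) th (dirU a' b'')"
  shows "\<forall>th\<in>Bpp pw pu \<rho>w \<rho>u.
     (\<forall>i. denomW pw (Phi f x y n \<epsilon>) i th \<noteq> 0) \<and> denomU pu (Phi f x y n \<epsilon>) th \<noteq> 0 \<and>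
     (\<forall>i j. GW pw \<rho>w (Phi f x y n \<epsilon>) i j differentiable (at th)) \<and>
     (\<forall>a b. GU pu \<rho>u (Phi f x y n \<epsilon>) a b differentiable (at th)) \<and>
     (\<forall>i k j. (\<Sum>t\<in>UNIV. \<bar>pd (GW pw \<rho>w (Phi f x y n \<epsilon>) i j) th (dirW k t)\<bar> * fst th $ k $ t)
        \<le> Amat pw pu Cw Cu Mww Mwu Muw Muu (Some i) (Some k) * GW pw \<rho>w (Phi f x y n \<epsilon>) i j th) \<and>
     (\<forall>i j. (\<Sum>a\<in>UNIV. \<Sum>b\<in>UNIV. \<bar>pd (GW pw \<rho>w (Phi f x y n \<epsilon>) i j) th (dirU a b)\<bar> * snd th $ a $ b)
        \<le> Amat pw pu Cw Cu Mww Mwu Muw Muu (Some i) None * GW pw \<rho>w (Phi f x y n \<epsilon>) i j th) \<and>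
     (\<forall>k a b. (\<Sum>t\<in>UNIV. \<bar>pd (GU pu \<rho>u (Phi f x y n \<epsilon>) a b) th (dirW k t)\<bar> * fst th $ k $ t)
        \<le> Amat pw pu Cw Cu Mww Mwu Muw Muu None (Some k) * GU pu \<rho>u (Phi f x y n \<epsilon>) a b th) \<and>
     (\<forall>a b. (\<Sum>a2\<in>UNIV. \<Sum>b2\<in>UNIV. \<bar>pd (GU pu \<rho>u (Phi f x y n \<epsilon>) a b) th (dirU a2 b2)\<bar> * snd th $ a2 $ b2)
        \<le> Amat pw pu Cw Cu Mww Mwu Muw Muu None None * GU pu \<rho>u (Phi f x y n \<epsilon>) a b th)"
proof -
  interpret monotone_objective f x y n \<epsilon> S
    using eps_pos S_open f_C2 f_d1_nonneg f_d2_nonneg by unfold_locales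
  have const_nonneg: "Cw \<ge> 0" "Cu \<ge> 0" "Mww \<ge> 0" "Mwu \<ge> 0" "Muw \<ge> 0" "Muu \<ge> 0"
    using consts_pos by auto
  {
    fix th :: "('k,'h,'d) param" assume th: "th \<in> Bpp pw pu \<rho>w \<rho>u"
    then have w_nonneg: "\<And>k t. fst th $ k $ t \<ge> 0" and u_nonneg: "\<And>a b. snd th $ a $ b \<ge> 0"
      by (auto simp: Bpp_def less_imp_le)
    note GW_bounds[OF pw rhow S_nbhd th w_nonneg u_nonneg const_nonneg(1-4)
        bound_Cw bound_Cu bound_Mww bound_Mwu]
      GU_bounds[OF pu rhou S_nbhd th w_nonneg u_nonneg const_nonneg(1,2,5,6)
        bound_Cw bound_Cu bound_Muw bound_Muu]
  }
  then show ?thesis by (intro ballI conjI allI) auto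
qed

end
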